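(* Let $m_0,\dots,m_{k-1}$ be models and let $D$ be a set of i.i.d. games between them, each game being labelled as belonging to a given task or not; let $D_{\text{task}}\subset D$ be the games belonging to the task and $D_{\neg\text{task}}\subset D$ those not belonging to it. Let $\mathbf{R}_{\text{task}}$, resp. $\mathbf{R}_{\neg\text{task}}$, be the rating vector obtained by fitting the games in $D_{\text{task}}$, resp. $D_{\neg\text{task}}$, with the optimal univariate rating system, i.e. a minimizer over $\mathbb{R}^k$ of the logistic loss $\mathcal{L}(D_{\text{task}},\cdot)$, resp. $\mathcal{L}(D_{\neg\text{task}},\cdot)$. Let $\mathbf{R}'$ be the Polyrating fit on all of $D$ with parameters $R'^{m}_{\neg\text{task}}$ and $\beta^m_1$ for each model $m$, using the formula $R'^m(g)=R'^m_{\neg\text{task}}+\beta^m_1\,[g\in D_{\text{task}}]$ and independent priors $\mathcal{N}(0,\sigma_{\neg\text{task}}^2)$ on each $R'^m_{\neg\text{task}}$ and $\mathcal{N}(0,\sigma_1^2)$ on each $\beta^m_1$; that is, $\mathbf{R}'$ minimizes $$\mathcal{L}(D_{\neg\text{task}},\mathbf{R}'_{\neg\text{task}})+\mathcal{L}(D_{\text{task}},\mathbf{R}'_{\text{task}})+\sum_{m}\frac{(R'^m_{\neg\text{task}})^2}{2\sigma_{\neg\text{task}}^2}+\sum_m\frac{(\beta^m_1)^2}{2\sigma_1^2},$$ where $R'^m_{\text{task}}:=R'^m_{\neg\text{task}}+\beta^m_1$. Then, as $|D_{\neg\text{task}}|\to\infty$ and $|D_{\text{task}}|\to\infty$, $\mathbf{R}_{\text{task}}$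 and $\mathbf{R}'_{\text{task}}$ converge, up to a constant difference, to the same optimal rating $\mathbf{R}^*_{\text{task}}$, provided all optimal ratings are finite. Similarly, $\mathbf{R}_{\neg\text{task}}$ and $\mathbf{R}'_{\neg\text{task}}$ converge, up to a constant difference, to the same optimal rating $\mathbf{R}^*_{\neg\text{task}}$, provided all optimal ratings are finite.
   Context: A game $g$ consists of two distinct models $g_{m_a},g_{m_b}$ and a result $g_r\in\{0,\tfrac12,1\}$ ($1$ if $g_{m_a}$ wins, $0$ if it loses, $\tfrac12$ for a draw). For a set $S$ of games and a rating vector $\mathbf{R}\in\mathbb{R}^k$, the logistic loss is $\mathcal{L}(S,\mathbf{R})=\sum_{g\in S}\big[-g_r\log\operatorname{sig}(\tfrac{R^{g_{m_a}}-R^{g_{m_b}}}{400})-(1-g_r)\log(1-\operatorname{sig}(\tfrac{R^{g_{m_a}}-R^{g_{m_b}}}{400}))\big]$ with $\operatorname{sig}(x)=1/(1+e^{-x})$. The optimal rating $\mathbf{R}^*_{\text{task}}$ (resp. $\mathbf{R}^*_{\neg\text{task}}$) is the minimizer of the expected logistic loss $\mathbf{R}\mapsto\mathbb{E}_g[\mathcal{L}(\{g\},\mathbf{R})]$ where $g$ is drawn from the distribution of games belonging (resp. not belonging) to the task. Ratings are only determined up to an additive constant, since adding a constant to all entries of $\mathbf{R}$ leaves $\mathcal{L}$ unchanged. *)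

theory Defs
  imports "HOL-Probability.Probability"
begin

text \<open>A game: (model a, model b, result of a). Models are elements of a finite type.\<close>
type_synonym 'k game = "'k \<times> 'k \<times> real"

definition valid_games :: "'k game set" where
  "valid_games = {(a, b, r). a \<noteq> b \<and> r \<in> {0, 1/2, 1}}"

definition sig :: "real \<Rightarrow> real" where
  "sig x = 1 / (1 + exp (- x))"

definition game_loss :: "('k \<Rightarrow> real) \<Rightarrow> 'k game \<Rightarrow> real" where
  "game_loss R g = (case g of (a, b, r) \<Rightarrow>
      - r * ln (sig ((R a - R b) / 400)) - (1 - r) * ln (1 - sig ((R a - R b) / 400)))"

definition loss :: "'k game list \<Rightarrow> ('k \<Rightarrow> real) \<Rightarrow> real" where
  "loss S R = sum_list (map (game_loss R) S)"

definition exp_loss :: "'k game pmf \<Rightarrow> ('k \<Rightarrow> real) \<Rightarrow> real" where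
  "exp_loss P R = measure_pmf.expectation P (game_loss R)"

definition is_minimizer :: "('a \<Rightarrow> real) \<Rightarrow> 'a \<Rightarrow> bool" where
  "is_minimizer f x \<longleftrightarrow> (\<forall>y. f x \<le> f y)"

text \<open>Polyrating objective with parameters (R'_{not task}, beta_1);
  Dn = games not in the task, Dt = games in the task.\<close>
definition poly_obj ::
  "real \<Rightarrow> real \<Rightarrow> 'k::finite game list \<Rightarrow> 'k game list \<Rightarrow> ('k \<Rightarrow> real) \<times> ('k \<Rightarrow> real) \<Rightarrow> real" where
  "poly_obj sn s1 Dn Dt p = (case p of (Rn, beta) \<Rightarrow>
      loss Dn Rn + loss Dt (\<lambda>m. Rn m + beta m)
      + (\<Sum>m\<in>UNIV. (Rn m)^2 / (2 * sn^2)) + (\<Sum>m\<in>UNIV. (beta m)^2 / (2 * s1^2)))"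

text \<open>The first n sampled games with label b (True = task, False = not task).\<close>
definition sample :: "(bool \<times> nat \<Rightarrow> 'o \<Rightarrow> 'k game) \<Rightarrow> bool \<Rightarrow> nat \<Rightarrow> 'o \<Rightarrow> 'k game list" where
  "sample X b n \<omega> = map (\<lambda>i. X (b, i) \<omega>) [0..<n]"

definition conv_upto_const :: "('i \<Rightarrow> 'k \<Rightarrow> real) \<Rightarrow> ('k \<Rightarrow> real) \<Rightarrow> 'i filter \<Rightarrow> bool" where
  "conv_upto_const Rs Rstar F \<longleftrightarrow> (\<exists>c. \<forall>m. ((\<lambda>x. Rs x m + c x) \<longlongrightarrow> Rstar m) F)"

end

theory Submission
  imports Defs
begin

(* The expected and the empirical logistic losses are convex functions of the rating vector and
   invariant under adding a constant to all ratings, so we work on the hyperplane of centred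
   rating vectors, where the expected loss has a unique minimiser.  By the strong law of large
   numbers (Hoeffding's inequality and Borel-Cantelli) the empirical game frequencies converge
   almost surely, hence the normalised empirical losses converge uniformly on compact sets.
   Convexity turns the strict minimum of the limit into a margin that holds on the whole
   complement of a ball and, for the unnormalised loss, grows linearly with the sample size; such
   a margin pins every empirical minimiser near the limit minimiser.  For Polyrating, written in
   the coordinates (R, R + B), the objective is the sum of the two empirical losses plus a convex
   prior that stays bounded near the two limit minimisers, so once both margins exceed that
   bound the joint minimiser is forced close to the pair of limit minimisers. *)

subsection \<open>Separated minima of convex functions\<close>

lemma convex_on_compose_linear:
  assumes "linear h" "convex_on UNIV f"
  shows "convex_on UNIV (\<lambda>x. f (h x))"
  using assms unfolding convex_on_def by (simp add: linear_add linear_scale)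

lemma convex_on_sum_fun:
  assumes "finite I" "convex S" "\<And>i. i \<in> I \<Longrightarrow> convex_on S (f i)"
  shows "convex_on S (\<lambda>x. \<Sum>i\<in>I. f i x)"
  using assms by (induction I rule: finite_induct) (auto simp: convex_on_const)

lemma convex_on_fst:
  assumes "convex_on C f" "convex D"
  shows "convex_on (C \<times> D) (\<lambda>p. f (fst p))"
  using assms unfolding convex_on_def by (auto intro: convex_Times)

lemma convex_on_snd:
  assumes "convex_on D f" "convex C"
  shows "convex_on (C \<times> D) (\<lambda>p. f (snd p))"
  using assms unfolding convex_on_def by (auto intro: convex_Times)

lemma uniform_limit_sum:
  fixes f :: "'i \<Rightarrow> 'n \<Rightarrow> 'a \<Rightarrow> 'b::real_normed_vector"
  assumes "finite I" "\<And>i. i \<in> I \<Longrightarrow> uniform_limit S (f i) (l i) F"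
  shows "uniform_limit S (\<lambda>n x. \<Sum>i\<in>I. f i n x) (\<lambda>x. \<Sum>i\<in>I. l i x) F"
  using assms
proof (induction I rule: finite_induct)
  case (insert i I)
  then show ?case by (simp add: uniform_limit_add)
qed (simp add: uniform_limit_const)

lemma uniform_limit_weighted_sum:
  fixes h :: "'i \<Rightarrow> 'a::topological_space \<Rightarrow> real"
  assumes "finite I" "compact K"
    and "\<And>i. i \<in> I \<Longrightarrow> continuous_on K (h i)" "\<And>i. i \<in> I \<Longrightarrow> ((\<lambda>n. w n i) \<longlongrightarrow> p i) F"
  shows "uniform_limit K (\<lambda>n x. \<Sum>i\<in>I. w n i * h i x) (\<lambda>x. \<Sum>i\<in>I. p i * h i x) F"
proof (rule uniform_limit_sum[OF assms(1)])
  fix i assume i: "i \<in> I"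
  have "uniform_limit K (\<lambda>n x. w n i) (\<lambda>x. p i) F"
    using assms(4)[OF i] by (auto intro!: uniform_limitI dest: tendstoD)
  moreover have "bounded (h i ` K)"
    using assms(2,3) i by (intro compact_imp_bounded compact_continuous_image) auto
  moreover have "bounded ((\<lambda>x. p i) ` K)" by (rule bounded_subset[of "{p i}"]) auto
  ultimately show "uniform_limit K (\<lambda>n x. w n i * h i x) (\<lambda>x. p i * h i x) F"
    by (intro uniform_lim_mult uniform_limit_const)
qed

definition separated_min_on ::
    "'a::real_normed_vector set \<Rightarrow> ('a \<Rightarrow> real) \<Rightarrow> 'a \<Rightarrow> real \<Rightarrow> real \<Rightarrow> bool" where
  "separated_min_on C f x r \<delta> \<longleftrightarrow> (\<forall>y\<in>C. r \<le> dist y x \<longrightarrow> f x + \<delta> \<le> f y)"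

lemma separated_min_onD:
  "separated_min_on C f x r \<delta> \<Longrightarrow> y \<in> C \<Longrightarrow> r \<le> dist y x \<Longrightarrow> f x + \<delta> \<le> f y"
  unfolding separated_min_on_def by blast

lemma separated_min_on_mono:
  "separated_min_on C f x r \<delta> \<Longrightarrow> r \<le> r' \<Longrightarrow> \<delta>' \<le> \<delta> \<Longrightarrow> separated_min_on C f x r' \<delta>'"
  unfolding separated_min_on_def by force

lemma separated_min_on_scale:
  "separated_min_on C f x r \<delta> \<Longrightarrow> 0 \<le> c \<Longrightarrow> separated_min_on C (\<lambda>y. c * f y) x r (c * \<delta>)"
  unfolding separated_min_on_def by (metis distrib_left mult_left_mono)

lemma dist_segment_point:
  fixes x y :: "'a::real_normed_vector"
  shows "dist (x + t *\<^sub>R (y - x)) x = \<bar>t\<bar> * dist y x"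
  by (simp add: dist_norm)

lemma segment_point_in_convex:
  "convex C \<Longrightarrow> x \<in> C \<Longrightarrow> y \<in> C \<Longrightarrow> 0 \<le> t \<Longrightarrow> t \<le> 1 \<Longrightarrow> x + t *\<^sub>R (y - x) \<in> C"
  using convexD_alt[of C x y t] by (simp add: algebra_simps)

lemma separated_min_on_sphereI:
  assumes f: "convex_on C f" and x: "x \<in> C" and r: "0 < r" and \<delta>: "0 \<le> \<delta>"
    and sphere: "\<And>y. y \<in> C \<Longrightarrow> dist y x = r \<Longrightarrow> f x + \<delta> \<le> f y"
  shows "separated_min_on C f x r \<delta>"
  unfolding separated_min_on_def
proof (intro ballI impI)
  fix y assume y: "y \<in> C" "r \<le> dist y x"
  define t where "t = r / dist y x"
  have "0 < dist y x" using y r by linarith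
  then have t: "0 < t" "t \<le> 1" using y r by (simp_all add: t_def)
  define z where "z = x + t *\<^sub>R (y - x)"
  have "z \<in> C"
    unfolding z_def using convex_on_imp_convex[OF f] x y t by (intro segment_point_in_convex) auto
  moreover have "dist z x = r"
    unfolding z_def dist_segment_point using \<open>0 < dist y x\<close> r by (simp add: t_def)
  ultimately have "f x + \<delta> \<le> f z" by (rule sphere)
  also have "f z \<le> (1 - t) * f x + t * f y"
    using convex_onD[OF f, of t x y] t x y by (simp add: z_def algebra_simps)
  finally have "\<delta> \<le> t * (f y - f x)" by (simp add: algebra_simps)
  moreover from this have "0 \<le> f y - f x"
    using \<delta> t zero_le_mult_iff[of t "f y - f x"] by linarith
  ultimately show "f x + \<delta> \<le> f y"
    using t mult_left_le_one_le[of "f y - f x" t] by linarith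
qed

lemma separated_min_on_unique_min:
  fixes f :: "'a::euclidean_space \<Rightarrow> real"
  assumes C: "closed C" and f: "convex_on C f" "continuous_on C f" and x: "x \<in> C"
    and min: "\<And>y. y \<in> C \<Longrightarrow> f x \<le> f y"
    and unique: "\<And>y. y \<in> C \<Longrightarrow> (\<And>z. z \<in> C \<Longrightarrow> f y \<le> f z) \<Longrightarrow> y = x"
    and r: "0 < r"
  obtains \<delta> where "0 < \<delta>" "separated_min_on C f x r \<delta>"
proof (cases "C \<inter> sphere x r = {}")
  case True
  then have "separated_min_on C f x r 1"
    by (intro separated_min_on_sphereI[OF f(1) x r]) (auto simp: dist_commute)
  then show ?thesis using that[of 1] by simp
next
  case False
  have "compact (C \<inter> sphere x r)" using C by (intro closed_Int_compact compact_sphere)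
  then obtain z where z: "z \<in> C \<inter> sphere x r" and zmin: "\<And>y. y \<in> C \<inter> sphere x r \<Longrightarrow> f z \<le> f y"
    using continuous_attains_inf[OF _ False continuous_on_subset[OF f(2)]] by blast
  have "f x < f z"
  proof (rule ccontr)
    assume "\<not> f x < f z"
    then have "z = x" using unique[of z] min z by force
    then show False using z r by simp
  qed
  then have "separated_min_on C f x r (f z - f x)"
    using zmin by (intro separated_min_on_sphereI[OF f(1) x r]) (auto simp: dist_commute)
  then show ?thesis using that[of "f z - f x"] \<open>f x < f z\<close> by simp
qed

lemma separated_min_on_uniform_limit:
  assumes f: "\<And>n. convex_on C (f n)" and lim: "uniform_limit (C \<inter> cball x r) f g F"
    and g: "separated_min_on C g x r \<delta>" and x: "x \<in> C" and r: "0 < r" and \<delta>: "0 < \<delta>"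
  shows "eventually (\<lambda>n. separated_min_on C (f n) x r (\<delta> / 2)) F"
proof -
  have "eventually (\<lambda>n. \<forall>y\<in>C \<inter> cball x r. dist (f n y) (g y) < \<delta> / 4) F"
    using \<delta> by (intro uniform_limitD[OF lim]) simp
  then show ?thesis
  proof (rule eventually_mono)
    fix n assume close: "\<forall>y\<in>C \<inter> cball x r. dist (f n y) (g y) < \<delta> / 4"
    show "separated_min_on C (f n) x r (\<delta> / 2)"
    proof (rule separated_min_on_sphereI[OF f x r])
      fix y assume y: "y \<in> C" "dist y x = r"
      have "\<bar>f n y - g y\<bar> < \<delta> / 4" "\<bar>f n x - g x\<bar> < \<delta> / 4"
        using close y x r by (auto simp: dist_real_def dist_commute)
      moreover have "g x + \<delta> \<le> g y" using separated_min_onD[OF g y(1)] y by simp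
      ultimately show "f n x + \<delta> / 2 \<le> f n y" by linarith
    qed (use \<delta> in simp)
  qed
qed

lemma separated_min_on_minimizer_dist:
  assumes "separated_min_on C f x r \<delta>" "0 < \<delta>" "x \<in> C" "u \<in> C" "\<And>y. y \<in> C \<Longrightarrow> f u \<le> f y"
  shows "dist u x < r"
proof (rule ccontr)
  assume "\<not> dist u x < r"
  then have "f x + \<delta> \<le> f u" using separated_min_onD[OF assms(1,4)] by simp
  then show False using assms(5)[OF assms(3)] assms(2) by simp
qed

lemma separated_min_on_obtain_minimizer:
  fixes f :: "'a::euclidean_space \<Rightarrow> real"
  assumes C: "closed C" and f: "continuous_on C f" and sep: "separated_min_on C f x r \<delta>"
    and x: "x \<in> C" and \<delta>: "0 < \<delta>"
  obtains u where "u \<in> C" "dist u x < r" "\<And>y. y \<in> C \<Longrightarrow> f u \<le> f y"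
    "separated_min_on C f u (2 * r) \<delta>"
proof -
  have K: "compact (C \<inter> cball x r)" using C by (intro closed_Int_compact compact_cball)
  have "\<not> r \<le> 0" using separated_min_onD[OF sep x] \<delta> by auto
  then have xK: "x \<in> C \<inter> cball x r" using x by simp
  obtain u where u: "u \<in> C \<inter> cball x r" and umin: "\<And>y. y \<in> C \<inter> cball x r \<Longrightarrow> f u \<le> f y"
    using continuous_attains_inf[OF K _ continuous_on_subset[OF f]] xK by blast
  have far: "f u + \<delta> \<le> f y" if "y \<in> C" "r \<le> dist y x" for y
    using separated_min_onD[OF sep that] umin[OF xK] by simp
  have global: "f u \<le> f y" if "y \<in> C" for y
    using umin[of y] far[of y] that \<delta> by (cases "dist y x \<le> r") (auto simp: dist_commute)
  show ?thesis
  proof (rule that)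
    show "dist u x < r" by (rule separated_min_on_minimizer_dist[OF sep \<delta> x]) (use u global in auto)
    show "separated_min_on C f u (2 * r) \<delta>"
      unfolding separated_min_on_def
    proof (intro ballI impI)
      fix y assume "y \<in> C" "2 * r \<le> dist y u"
      moreover have "dist y u \<le> dist y x + dist u x" by (rule dist_triangle2)
      ultimately show "f u + \<delta> \<le> f y" using far \<open>dist u x < r\<close> by force
    qed
  qed (use u global in auto)
qed

(* Walk from (u, v) towards (x, y) until one coordinate is at distance r: convexity and the
   minimality of (x, y) keep \<Phi> below \<Phi> (u, v), while the margins push it up by \<delta>. *)
lemma joint_minimizer_near_separated_mins:
  fixes f g :: "'a::real_normed_vector \<Rightarrow> real" and \<Phi> :: "'a \<times> 'a \<Rightarrow> real"
  assumes \<Phi>: "convex_on (C \<times> C) \<Phi>" and \<Phi>_ge: "\<And>x y. x \<in> C \<Longrightarrow> y \<in> C \<Longrightarrow> f x + g y \<le> \<Phi> (x, y)"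
    and u: "u \<in> C" "\<And>y. y \<in> C \<Longrightarrow> f u \<le> f y" "separated_min_on C f u r \<delta>"
    and v: "v \<in> C" "\<And>y. y \<in> C \<Longrightarrow> g v \<le> g y" "separated_min_on C g v r \<delta>"
    and \<Phi>_uv: "\<Phi> (u, v) < f u + g v + \<delta>" and r: "0 < r"
    and xy: "x \<in> C" "y \<in> C" "\<And>x' y'. x' \<in> C \<Longrightarrow> y' \<in> C \<Longrightarrow> \<Phi> (x, y) \<le> \<Phi> (x', y')"
  shows "dist x u < r \<and> dist y v < r"
proof (rule ccontr)
  assume "\<not> (dist x u < r \<and> dist y v < r)"
  then have D: "r \<le> max (dist x u) (dist y v)" by auto
  define t where "t = r / max (dist x u) (dist y v)"
  have t: "0 < t" "t \<le> 1" using D r by (auto simp: t_def)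
  define x' y' where "x' = u + t *\<^sub>R (x - u)" and "y' = v + t *\<^sub>R (y - v)"
  have "convex (fst ` (C \<times> C))"
    using convex_linear_image[OF linear_fst convex_on_imp_convex[OF \<Phi>]] .
  then have C: "convex C" using u(1) by (simp add: fst_image_times split: if_splits)
  have x'y': "x' \<in> C" "y' \<in> C"
    unfolding x'_def y'_def using C u v xy t by (auto intro: segment_point_in_convex)
  have "r \<le> dist x' u \<or> r \<le> dist y' v"
    unfolding x'_def y'_def dist_segment_point using t D r by (auto simp: t_def max_def split: if_splits)
  then have "f u + g v + \<delta> \<le> f x' + g y'"
  proof
    assume "r \<le> dist x' u"
    then show ?thesis using separated_min_onD[OF u(3) x'y'(1)] v(2)[OF x'y'(2)] by simp
  next
    assume "r \<le> dist y' v"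
    then show ?thesis using separated_min_onD[OF v(3) x'y'(2)] u(2)[OF x'y'(1)] by simp
  qed
  also have "\<dots> \<le> \<Phi> (x', y')" using \<Phi>_ge x'y' by blast
  also have "\<dots> \<le> (1 - t) * \<Phi> (u, v) + t * \<Phi> (x, y)"
  proof -
    have "(1 - t) *\<^sub>R (u, v) + t *\<^sub>R (x, y) = (x', y')"
      by (simp add: x'_def y'_def algebra_simps)
    then show ?thesis using convex_onD[OF \<Phi>, of t "(u, v)" "(x, y)"] t u v xy by simp
  qed
  also have "\<dots> \<le> \<Phi> (u, v)"
    using mult_left_mono[OF xy(3)[OF u(1) v(1)], of t] t by (simp add: algebra_simps)
  finally show False using \<Phi>_uv by simp
qed

lemma eventually_real_ge_sequentially: "eventually (\<lambda>n. c \<le> real n) sequentially"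
  using eventually_ge_at_top[of "nat \<lceil>c\<rceil>"] by (rule eventually_mono) linarith

lemma separated_min_on_eventually_unbounded:
  fixes F :: "nat \<Rightarrow> 'a::euclidean_space \<Rightarrow> real"
  assumes C: "closed C" and F: "\<And>n. convex_on C (F n)"
    and f: "convex_on C f" "continuous_on C f" and x: "x \<in> C"
    and min: "\<And>y. y \<in> C \<Longrightarrow> f x \<le> f y"
    and unique: "\<And>y. y \<in> C \<Longrightarrow> (\<And>z. z \<in> C \<Longrightarrow> f y \<le> f z) \<Longrightarrow> y = x"
    and lim: "uniform_limit (C \<inter> cball x r) F f sequentially" and r: "0 < r"
  shows "eventually (\<lambda>n. separated_min_on C (\<lambda>y. real n * F n y) x r K) sequentially"
proof -
  obtain \<delta> where \<delta>: "0 < \<delta>" "separated_min_on C f x r \<delta>"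
    using separated_min_on_unique_min[OF C f x min unique r] by blast
  have "eventually (\<lambda>n. separated_min_on C (F n) x r (\<delta> / 2) \<and> K / (\<delta> / 2) \<le> real n) sequentially"
    using separated_min_on_uniform_limit[OF F lim \<delta>(2) x r \<delta>(1)] eventually_real_ge_sequentially
    by (rule eventually_conj)
  then show ?thesis
  proof (rule eventually_mono, elim conjE)
    fix n assume "separated_min_on C (F n) x r (\<delta> / 2)" "K / (\<delta> / 2) \<le> real n"
    then show "separated_min_on C (\<lambda>y. real n * F n y) x r K"
      using separated_min_on_scale[of C "F n" x r "\<delta> / 2" "real n"] \<delta>(1)
      by (auto elim: separated_min_on_mono simp: divide_le_eq)
  qed
qed

lemma minimizers_tendsto_separated_min:
  fixes L :: "'i \<Rightarrow> 'a::euclidean_space \<Rightarrow> real" and u :: "'i \<Rightarrow> 'a"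
  assumes C: "closed C" and L: "\<And>i. continuous_on C (L i)" and x: "x \<in> C"
    and sep: "\<And>r. 0 < r \<Longrightarrow> eventually (\<lambda>i. separated_min_on C (L i) x r 1) F"
    and u: "\<And>i. u i \<in> C"
      "\<And>i. (\<exists>v\<in>C. \<forall>y\<in>C. L i v \<le> L i y) \<Longrightarrow> (\<And>y. y \<in> C \<Longrightarrow> L i (u i) \<le> L i y)"
  shows "(u \<longlongrightarrow> x) F"
  unfolding tendsto_iff
proof (intro allI impI)
  fix r :: real assume "0 < r"
  show "eventually (\<lambda>i. dist (u i) x < r) F"
    using sep[OF \<open>0 < r\<close>]
  proof (rule eventually_mono)
    fix i assume sep_i: "separated_min_on C (L i) x r 1"
    then obtain v where "v \<in> C" "\<And>y. y \<in> C \<Longrightarrow> L i v \<le> L i y"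
      using separated_min_on_obtain_minimizer[OF C L sep_i x] by auto
    then have "\<And>y. y \<in> C \<Longrightarrow> L i (u i) \<le> L i y" using u(2) by blast
    then show "dist (u i) x < r"
      using separated_min_on_minimizer_dist[OF sep_i zero_less_one x u(1)] by blast
  qed
qed

lemma joint_minimizer_near_separated:
  fixes L M :: "'a::euclidean_space \<Rightarrow> real" and q :: "'a \<times> 'a \<Rightarrow> real"
  assumes C: "closed C" "convex C" and r: "0 < r"
    and L: "convex_on C L" "continuous_on C L" "separated_min_on C L x0 r K"
    and M: "convex_on C M" "continuous_on C M" "separated_min_on C M y0 r K"
    and q: "convex_on (C \<times> C) q" "\<And>p. p \<in> C \<times> C \<Longrightarrow> 0 \<le> q p"
      "\<And>x y. x \<in> C \<inter> cball x0 r \<Longrightarrow> y \<in> C \<inter> cball y0 r \<Longrightarrow> q (x, y) < K"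
    and x0: "x0 \<in> C" and y0: "y0 \<in> C"
    and xy: "x \<in> C" "y \<in> C"
      "\<And>x' y'. x' \<in> C \<Longrightarrow> y' \<in> C \<Longrightarrow> L x + M y + q (x, y) \<le> L x' + M y' + q (x', y')"
  shows "dist x x0 < 3 * r \<and> dist y y0 < 3 * r"
proof -
  have K: "0 < K" using q(2)[of "(x0, y0)"] q(3)[of x0 y0] x0 y0 r by simp
  obtain u where u: "u \<in> C" "dist u x0 < r" "\<And>y. y \<in> C \<Longrightarrow> L u \<le> L y"
    "separated_min_on C L u (2 * r) K"
    using separated_min_on_obtain_minimizer[OF C(1) L(2,3) x0 K] by blast
  obtain v where v: "v \<in> C" "dist v y0 < r" "\<And>y. y \<in> C \<Longrightarrow> M v \<le> M y"
    "separated_min_on C M v (2 * r) K"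
    using separated_min_on_obtain_minimizer[OF C(1) M(2,3) y0 K] by blast
  define \<Phi> where "\<Phi> p = L (fst p) + M (snd p) + q p" for p
  have "convex_on (C \<times> C) \<Phi>"
    unfolding \<Phi>_def using C(2) L(1) M(1) q(1) by (intro convex_on_add convex_on_fst convex_on_snd)
  moreover have "q (u, v) < K" using q(3) u(1,2) v(1,2) by (simp add: dist_commute)
  ultimately have "dist x u < 2 * r \<and> dist y v < 2 * r"
    using q(2) u v r xy
    by (intro joint_minimizer_near_separated_mins[where f = L and g = M and \<Phi> = \<Phi>]) (auto simp: \<Phi>_def)
  then show ?thesis
    using u(2) v(2) dist_triangle[of x x0 u] dist_triangle[of y y0 v] by linarith
qed

lemma joint_minimizers_tendsto:
  fixes L M :: "'i \<Rightarrow> 'a::euclidean_space \<Rightarrow> real" and q :: "'a \<times> 'a \<Rightarrow> real"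
    and x y :: "'i \<Rightarrow> 'a"
  assumes C: "closed C" "convex C"
    and L: "\<And>i. convex_on C (L i)" "\<And>i. continuous_on C (L i)"
      "\<And>r K. 0 < r \<Longrightarrow> eventually (\<lambda>i. separated_min_on C (L i) x0 r K) F"
    and M: "\<And>i. convex_on C (M i)" "\<And>i. continuous_on C (M i)"
      "\<And>r K. 0 < r \<Longrightarrow> eventually (\<lambda>i. separated_min_on C (M i) y0 r K) F"
    and q: "convex_on (C \<times> C) q" "continuous_on (C \<times> C) q" "\<And>p. p \<in> C \<times> C \<Longrightarrow> 0 \<le> q p"
    and x0: "x0 \<in> C" and y0: "y0 \<in> C"
    and xy: "\<And>i. x i \<in> C" "\<And>i. y i \<in> C"
      "\<And>i x' y'. x' \<in> C \<Longrightarrow> y' \<in> C \<Longrightarrow>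
         L i (x i) + M i (y i) + q (x i, y i) \<le> L i x' + M i y' + q (x', y')"
  shows "(x \<longlongrightarrow> x0) F \<and> (y \<longlongrightarrow> y0) F"
proof -
  have near: "eventually (\<lambda>i. dist (x i) x0 < 3 * r \<and> dist (y i) y0 < 3 * r) F" if r: "0 < r" for r
  proof -
    define S where "S = (C \<inter> cball x0 r) \<times> (C \<inter> cball y0 r)"
    have "compact S" unfolding S_def using C(1) by (intro compact_Times closed_Int_compact compact_cball)
    then have "bounded (q ` S)"
      using q(2) by (intro compact_imp_bounded compact_continuous_image)
        (auto intro: continuous_on_subset simp: S_def)
    then obtain B where B: "\<forall>p\<in>S. \<bar>q p\<bar> \<le> B" by (auto simp: bounded_real)
    show ?thesis
      using eventually_conj[OF L(3)[OF r, of "B + 1"] M(3)[OF r, of "B + 1"]]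
    proof (rule eventually_mono, elim conjE)
      fix i assume "separated_min_on C (L i) x0 r (B + 1)" "separated_min_on C (M i) y0 r (B + 1)"
      moreover have "q (x', y') < B + 1" if "x' \<in> C \<inter> cball x0 r" "y' \<in> C \<inter> cball y0 r" for x' y'
        using B that by (force simp: S_def)
      ultimately show "dist (x i) x0 < 3 * r \<and> dist (y i) y0 < 3 * r"
        using L(1,2) M(1,2) q(1,3) x0 y0 xy
        by (intro joint_minimizer_near_separated[OF C r, where L = "L i" and M = "M i" and q = q]) auto
    qed
  qed
  show ?thesis
    unfolding tendsto_iff
  proof (intro conjI allI impI)
    fix e :: real assume "0 < e"
    with near[of "e / 3"] show "eventually (\<lambda>i. dist (x i) x0 < e) F" "eventually (\<lambda>i. dist (y i) y0 < e) F"
      by (auto elim: eventually_mono)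
  qed
qed

subsection \<open>A strong law for bounded independent variables\<close>

context prob_space
begin

lemma prob_average_deviation_le:
  fixes Z :: "'i \<Rightarrow> 'a \<Rightarrow> real" and idx :: "nat \<Rightarrow> 'i"
  assumes indep: "indep_vars (\<lambda>_. borel) Z (range idx)" and idx: "inj idx"
    and bounded: "\<And>n. AE x in M. Z (idx n) x \<in> {0..1}"
    and mean: "\<And>n. expectation (Z (idx n)) = \<mu>"
    and N: "0 < N" and \<epsilon>: "0 \<le> \<epsilon>"
  shows "prob {x \<in> space M. \<epsilon> \<le> \<bar>(\<Sum>n<N. Z (idx n) x) / N - \<mu>\<bar>} \<le> 2 * exp (- 2 * \<epsilon>\<^sup>2) ^ N"
proof -
  define I where "I = idx ` {..<N}"
  have inj: "inj_on idx {..<N}" using idx by (rule inj_on_subset) simp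
  have sum_I: "(\<Sum>i\<in>I. h i) = (\<Sum>n<N. h (idx n))" for h :: "'i \<Rightarrow> real"
    unfolding I_def sum.reindex[OF inj] by simp
  have card_I: "card I = N" unfolding I_def using card_image[OF inj] by simp
  interpret H: Hoeffding_ineq M I Z "\<lambda>_. 0" "\<lambda>_. 1" "\<Sum>i\<in>I. expectation (Z i)"
  proof unfold_locales
    show "finite I" by (simp add: I_def)
    show "indep_vars (\<lambda>_. borel) Z I" using indep by (rule indep_vars_subset) (simp add: I_def image_subsetI)
  next
    fix i assume "i \<in> I"
    then obtain n where "i = idx n" by (auto simp: I_def)
    then show "AE x in M. Z i x \<in> {0..1}" using bounded[of n] by simp
  qed
  have "{x \<in> space M. \<epsilon> \<le> \<bar>(\<Sum>n<N. Z (idx n) x) / N - \<mu>\<bar>}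
      = {x \<in> space M. real N * \<epsilon> \<le> \<bar>(\<Sum>i\<in>I. Z i x) - (\<Sum>i\<in>I. expectation (Z i))\<bar>}"
  proof -
    have "\<bar>s / N - \<mu>\<bar> = \<bar>s - N * \<mu>\<bar> / N" for s :: real
    proof -
      have "s / N - \<mu> = (s - N * \<mu>) / N" using N by (simp add: field_simps)
      then show ?thesis by (simp add: abs_divide)
    qed
    then show ?thesis using N by (simp add: sum_I mean le_divide_eq mult.commute)
  qed
  also have "prob \<dots> \<le> 2 * exp (- 2 * (real N * \<epsilon>)\<^sup>2 / (\<Sum>i\<in>I. (1 - 0)\<^sup>2))"
    using N \<epsilon> card_I by (intro H.Hoeffding_ineq_abs_ge) auto
  also have "\<dots> = 2 * exp (- 2 * \<epsilon>\<^sup>2) ^ N"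
    using N card_I by (simp add: power2_eq_square flip: exp_of_nat_mult)
  finally show ?thesis .
qed

lemma AE_eventually_average_near:
  fixes Z :: "'i \<Rightarrow> 'a \<Rightarrow> real" and idx :: "nat \<Rightarrow> 'i"
  assumes indep: "indep_vars (\<lambda>_. borel) Z (range idx)" and idx: "inj idx"
    and bounded: "\<And>n. AE x in M. Z (idx n) x \<in> {0..1}"
    and mean: "\<And>n. expectation (Z (idx n)) = \<mu>"
    and \<epsilon>: "0 < \<epsilon>"
  shows "AE x in M. eventually (\<lambda>N. \<bar>(\<Sum>n<N. Z (idx n) x) / N - \<mu>\<bar> < \<epsilon>) sequentially"
proof -
  define A where "A N = {x \<in> space M. \<epsilon> \<le> \<bar>(\<Sum>n<N. Z (idx n) x) / N - \<mu>\<bar>}" for N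
  have [measurable]: "Z (idx n) \<in> borel_measurable M" for n
    using indep by (auto simp: indep_vars_def)
  have A_sets: "A N \<in> sets M" for N unfolding A_def by measurable
  have A_le: "measure M (A N) \<le> 2 * exp (- 2 * \<epsilon>\<^sup>2) ^ N" for N
  proof (cases "N = 0")
    case True
    then have "2 * exp (- 2 * \<epsilon>\<^sup>2) ^ N = 2" by simp
    then show ?thesis using prob_le_1[of "A N"] by linarith
  next
    case False
    then show ?thesis unfolding A_def using prob_average_deviation_le[OF assms(1-4)] \<epsilon> by simp
  qed
  have "summable (\<lambda>N. 2 * exp (- 2 * \<epsilon>\<^sup>2) ^ N)"
    using \<epsilon> by (intro summable_mult summable_geometric) simp
  then have summable: "summable (\<lambda>N. measure M (A N))"
    by (rule summable_comparison_test'[where N = 0]) (use A_le in simp)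
  have "AE x in M. eventually (\<lambda>N. x \<in> space M - A N) sequentially"
    by (rule borel_cantelli_AE1[OF A_sets _ summable]) (simp add: less_top[symmetric])
  then show ?thesis
  proof (rule eventually_mono)
    fix x assume "eventually (\<lambda>N. x \<in> space M - A N) sequentially"
    then show "eventually (\<lambda>N. \<bar>(\<Sum>n<N. Z (idx n) x) / N - \<mu>\<bar> < \<epsilon>) sequentially"
      by (rule eventually_mono) (auto simp: A_def)
  qed
qed

lemma AE_average_tendsto:
  fixes Z :: "'i \<Rightarrow> 'a \<Rightarrow> real" and idx :: "nat \<Rightarrow> 'i"
  assumes "indep_vars (\<lambda>_. borel) Z (range idx)" "inj idx"
    and "\<And>n. AE x in M. Z (idx n) x \<in> {0..1}"
    and "\<And>n. expectation (Z (idx n)) = \<mu>"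
  shows "AE x in M. (\<lambda>N. (\<Sum>n<N. Z (idx n) x) / N) \<longlonglongrightarrow> \<mu>"
proof -
  have "AE x in M. \<forall>j::nat. eventually (\<lambda>N. \<bar>(\<Sum>n<N. Z (idx n) x) / N - \<mu>\<bar> < 1 / Suc j) sequentially"
    unfolding AE_all_countable by (intro allI AE_eventually_average_near[OF assms]) simp
  then show ?thesis
  proof (rule eventually_mono)
    fix x assume elim: "\<forall>j::nat. eventually (\<lambda>N. \<bar>(\<Sum>n<N. Z (idx n) x) / N - \<mu>\<bar> < 1 / Suc j) sequentially"
    show "(\<lambda>N. (\<Sum>n<N. Z (idx n) x) / N) \<longlonglongrightarrow> \<mu>"
      unfolding tendsto_iff dist_real_def
    proof (intro allI impI)
      fix e :: real assume "0 < e"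
      then obtain j :: nat where j: "1 / Suc j < e" using nat_approx_posE by blast
      from elim have "eventually (\<lambda>N. \<bar>(\<Sum>n<N. Z (idx n) x) / N - \<mu>\<bar> < 1 / Suc j) sequentially" ..
      then show "eventually (\<lambda>N. \<bar>(\<Sum>n<N. Z (idx n) x) / N - \<mu>\<bar> < e) sequentially"
        by (rule eventually_mono) (use j in linarith)
    qed
  qed
qed

end

subsection \<open>The logistic loss\<close>

definition softplus :: "real \<Rightarrow> real" where
  "softplus z = ln (1 + exp z)"

lemma game_loss_softplus:
  "game_loss R (a, b, r) = r * softplus (- ((R a - R b) / 400)) + (1 - r) * softplus ((R a - R b) / 400)"
proof -
  define x where "x = (R a - R b) / 400"
  have pos: "0 < 1 + exp x" "0 < 1 + exp (- x)" by (simp_all add: add_pos_pos)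
  have "ln (sig x) = - softplus (- x)"
    unfolding sig_def softplus_def using pos by (simp add: ln_div)
  moreover have "1 - sig x = 1 / (1 + exp x)"
    unfolding sig_def using pos by (simp add: field_simps exp_minus)
  then have "ln (1 - sig x) = - softplus x"
    unfolding softplus_def using pos by (simp add: ln_div)
  ultimately show ?thesis unfolding game_loss_def x_def by simp
qed

lemma convex_on_softplus: "convex_on UNIV softplus"
proof (rule convex_on_realI[where f' = "\<lambda>z. exp z / (1 + exp z)"])
  fix x show "(softplus has_real_derivative exp x / (1 + exp x)) (at x)"
    unfolding softplus_def by (auto intro!: derivative_eq_intros simp: add_pos_pos)
next
  fix x y :: real assume "x \<le> y"
  have "1 + exp x \<noteq> 0" "1 + exp y \<noteq> 0" by (smt (verit) exp_gt_zero)+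
  then have "exp x / (1 + exp x) = 1 - 1 / (1 + exp x)" "exp y / (1 + exp y) = 1 - 1 / (1 + exp y)"
    by (simp_all add: field_simps)
  moreover have "1 / (1 + exp y) \<le> 1 / (1 + exp x)"
    using \<open>x \<le> y\<close> by (intro divide_left_mono) (auto simp: add_pos_pos)
  ultimately show "exp x / (1 + exp x) \<le> exp y / (1 + exp y)" by linarith
qed simp

lemma game_loss_shift: "game_loss (\<lambda>m. R m + c) g = game_loss R g"
  unfolding game_loss_def by (cases g) simp

lemma continuous_on_game_loss: "continuous_on S (\<lambda>v::real^'k. game_loss (vec_nth v) g)"
proof -
  obtain a b r where g: "g = (a, b, r)" by (cases g)
  have "\<And>z::real. 1 + exp z \<noteq> 0" by (smt (verit) exp_gt_zero)
  then show ?thesis unfolding g game_loss_softplus softplus_def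
    by (intro continuous_intros) auto
qed

lemma convex_on_game_loss:
  assumes "g \<in> valid_games"
  shows "convex_on UNIV (\<lambda>v::real^'k. game_loss (vec_nth v) g)"
proof -
  obtain a b r where g: "g = (a, b, r)" and r: "0 \<le> r" "r \<le> 1"
    using assms by (auto simp: valid_games_def)
  define d where "d v = (v $ a - v $ b) / 400" for v :: "real^'k"
  have d: "linear d" unfolding d_def by (rule linearI) (simp_all add: field_simps)
  have "convex_on UNIV (\<lambda>v. r * softplus (- d v) + (1 - r) * softplus (d v))"
    using r by (intro convex_on_add convex_on_cmul convex_on_compose_linear[OF _ convex_on_softplus]
        linear_compose_neg d) simp_all
  then show ?thesis unfolding g game_loss_softplus d_def .
qed

lemma finite_valid_games: "finite (valid_games :: 'k::finite game set)"
proof (rule finite_subset)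
  show "valid_games \<subseteq> (UNIV :: 'k set) \<times> (UNIV :: 'k set) \<times> {0, 1/2, 1::real}"
    unfolding valid_games_def by auto
qed simp

definition weighted_loss :: "('k::finite game \<Rightarrow> real) \<Rightarrow> ('k \<Rightarrow> real) \<Rightarrow> real" where
  "weighted_loss w R = (\<Sum>g\<in>valid_games. w g * game_loss R g)"

lemma weighted_loss_shift: "weighted_loss w (\<lambda>m. R m + c) = weighted_loss w R"
  unfolding weighted_loss_def game_loss_shift ..

lemma convex_on_weighted_loss:
  assumes "\<And>g. g \<in> valid_games \<Longrightarrow> 0 \<le> w g"
  shows "convex_on UNIV (\<lambda>v::real^'k::finite. weighted_loss w (vec_nth v))"
  unfolding weighted_loss_def using assms
  by (intro convex_on_sum_fun finite_valid_games convex_on_cmul convex_on_game_loss) auto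

lemma continuous_on_weighted_loss: "continuous_on S (\<lambda>v::real^'k::finite. weighted_loss w (vec_nth v))"
  unfolding weighted_loss_def by (intro continuous_intros continuous_on_game_loss)

lemma loss_eq_weighted_loss:
  assumes "set S \<subseteq> valid_games"
  shows "loss S R = weighted_loss (\<lambda>g. real (count_list S g)) R"
  using assms
proof (induction S)
  case Nil
  then show ?case by (simp add: loss_def weighted_loss_def)
next
  case (Cons g S)
  have "weighted_loss (\<lambda>h. real (count_list (g # S) h)) R
      = (\<Sum>h\<in>valid_games. (if g = h then game_loss R h else 0) + real (count_list S h) * game_loss R h)"
    unfolding weighted_loss_def by (intro sum.cong) (auto simp: algebra_simps)
  also have "\<dots> = game_loss R g + loss S R"
    using Cons by (simp add: sum.distrib weighted_loss_def finite_valid_games)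
  finally show ?case by (simp add: loss_def)
qed

lemma loss_eq_scaled_weighted_loss:
  assumes "set S \<subseteq> valid_games"
  shows "loss S R = real (length S) * weighted_loss (\<lambda>g. count_list S g / length S) R"
proof (cases "S = []")
  case False
  then show ?thesis
    unfolding loss_eq_weighted_loss[OF assms] weighted_loss_def
    by (simp add: sum_distrib_left)
qed (simp add: loss_def)

lemma exp_loss_eq_weighted_loss:
  assumes "set_pmf P \<subseteq> valid_games"
  shows "exp_loss P R = weighted_loss (pmf P) R"
  unfolding exp_loss_def weighted_loss_def
  by (subst integral_measure_pmf[OF finite_valid_games]) (use assms in auto)

lemma loss_shift: "loss S (\<lambda>m. R m + c) = loss S R"
  unfolding loss_def game_loss_shift ..

lemma continuous_on_loss:
  "set S \<subseteq> valid_games \<Longrightarrow> continuous_on C (\<lambda>v::real^'k::finite. loss S (vec_nth v))"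
  by (simp add: loss_eq_weighted_loss continuous_on_weighted_loss)

lemma convex_on_loss:
  "set S \<subseteq> valid_games \<Longrightarrow> convex_on UNIV (\<lambda>v::real^'k::finite. loss S (vec_nth v))"
  by (simp add: loss_eq_weighted_loss convex_on_weighted_loss)

subsection \<open>Centred ratings\<close>

definition centered :: "(real^'k::finite) set" where
  "centered = {v. (\<Sum>m\<in>UNIV. v $ m) = 0}"

definition center :: "('k::finite \<Rightarrow> real) \<Rightarrow> real^'k" where
  "center R = (\<chi> m. R m - (\<Sum>j\<in>UNIV. R j) / CARD('k))"

lemma closed_centered: "closed centered"
  unfolding centered_def by (intro closed_Collect_eq continuous_intros)

lemma convex_centered: "convex centered"
  unfolding centered_def convex_def by (simp add: sum.distrib flip: sum_distrib_left)

lemma center_in_centered: "center R \<in> centered"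
  unfolding centered_def center_def by (simp add: sum_subtractf)

lemma center_vec_nth: "v \<in> centered \<Longrightarrow> center (vec_nth v) = v"
  unfolding centered_def center_def by (simp add: vec_eq_iff)

lemma center_shift: "center (\<lambda>m. R m + c) = center R"
  for R :: "'k::finite \<Rightarrow> real"
  unfolding center_def by (simp add: vec_eq_iff sum.distrib add_divide_distrib)

lemma center_add: "center (\<lambda>m. R m + B m) = center R + center B"
  unfolding center_def by (simp add: vec_eq_iff sum.distrib add_divide_distrib)

lemma vec_nth_center: "\<exists>c. vec_nth (center R) = (\<lambda>m. R m + c)"
  for R :: "'k::finite \<Rightarrow> real"
  unfolding center_def by (auto simp: fun_eq_iff)

lemma tendsto_center_imp_conv_upto_const:
  fixes Rs :: "'i \<Rightarrow> 'k::finite \<Rightarrow> real" and R :: "'k \<Rightarrow> real"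
  assumes "((\<lambda>i. center (Rs i)) \<longlongrightarrow> center R) F"
  shows "conv_upto_const Rs R F"
  unfolding conv_upto_const_def
proof (intro exI allI)
  define mean where "mean S = (\<Sum>j\<in>UNIV. S j) / CARD('k)" for S :: "'k \<Rightarrow> real"
  fix m
  have "((\<lambda>i. center (Rs i) $ m + mean R) \<longlongrightarrow> center R $ m + mean R) F"
    by (intro tendsto_add tendsto_vec_nth assms tendsto_const)
  then show "((\<lambda>i. Rs i m + (mean R - mean (Rs i))) \<longlongrightarrow> R m) F"
    by (simp add: center_def mean_def algebra_simps)
qed

lemma shift_invariant_center:
  assumes "\<And>R c. f (\<lambda>m. R m + c) = f R"
  shows "f (vec_nth (center R)) = f R"
  using vec_nth_center[of R] assms by metis

lemma is_minimizer_iff_centered_min: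
  assumes shift: "\<And>R c. f (\<lambda>m. R m + c) = f R"
  shows "is_minimizer f (vec_nth v) \<longleftrightarrow> (\<forall>y\<in>centered. f (vec_nth v) \<le> f (vec_nth y))"
proof
  assume "\<forall>y\<in>centered. f (vec_nth v) \<le> f (vec_nth y)"
  then have "f (vec_nth v) \<le> f (vec_nth (center R))" for R using center_in_centered by blast
  then show "is_minimizer f (vec_nth v)"
    unfolding is_minimizer_def shift_invariant_center[of f, OF shift] by blast
qed (simp add: is_minimizer_def)

lemma centered_unique_min:
  assumes shift: "\<And>R c. f (\<lambda>m. R m + c) = f R" and min: "is_minimizer f R0"
    and unique: "\<And>R. is_minimizer f R \<Longrightarrow> \<exists>c. \<forall>m. R m = R0 m + c"
  shows "\<And>y. y \<in> centered \<Longrightarrow> f (vec_nth (center R0)) \<le> f (vec_nth y)"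
    and "\<And>y. y \<in> centered \<Longrightarrow> (\<And>z. z \<in> centered \<Longrightarrow> f (vec_nth y) \<le> f (vec_nth z)) \<Longrightarrow> y = center R0"
proof -
  show "f (vec_nth (center R0)) \<le> f (vec_nth y)" for y
    using min unfolding is_minimizer_def shift_invariant_center[of f, OF shift] by blast
  fix y assume y: "y \<in> centered" and "\<And>z. z \<in> centered \<Longrightarrow> f (vec_nth y) \<le> f (vec_nth z)"
  then have "is_minimizer f (vec_nth y)" using is_minimizer_iff_centered_min[of f, OF shift] by blast
  then obtain c where "vec_nth y = (\<lambda>m. R0 m + c)" using unique by blast
  then show "y = center R0" using center_vec_nth[OF y] center_shift by metis
qed

subsection \<open>The Polyrating objective\<close>

definition gauss_prior :: "real \<Rightarrow> ('k::finite \<Rightarrow> real) \<Rightarrow> real" where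
  "gauss_prior s R = (\<Sum>m\<in>UNIV. (R m)\<^sup>2 / (2 * s\<^sup>2))"

lemma poly_obj_eq:
  "poly_obj sn s1 Dn Dt (R, B) = loss Dn R + loss Dt (\<lambda>m. R m + B m) + gauss_prior sn R + gauss_prior s1 B"
  unfolding poly_obj_def gauss_prior_def by simp

lemma gauss_prior_nonneg: "0 \<le> gauss_prior s R"
  unfolding gauss_prior_def by (intro sum_nonneg) simp

lemma gauss_prior_center_le: "gauss_prior s (vec_nth (center R)) \<le> gauss_prior s R"
  for R :: "'k::finite \<Rightarrow> real"
proof -
  define \<mu> where "\<mu> = (\<Sum>j\<in>UNIV. R j) / CARD('k)"
  have "(\<Sum>m\<in>UNIV. (R m - \<mu>)\<^sup>2) = (\<Sum>m\<in>UNIV. (R m)\<^sup>2) - CARD('k) * \<mu>\<^sup>2"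
    by (simp add: power2_diff sum.distrib sum_subtractf flip: sum_distrib_left sum_distrib_right)
      (simp add: \<mu>_def power2_eq_square)
  then have "(\<Sum>m\<in>UNIV. (R m - \<mu>)\<^sup>2) \<le> (\<Sum>m\<in>UNIV. (R m)\<^sup>2)" by simp
  then show ?thesis
    unfolding gauss_prior_def center_def \<mu>_def[symmetric]
    by (simp add: divide_right_mono flip: sum_divide_distrib)
qed

lemma convex_on_gauss_prior: "convex_on UNIV (\<lambda>v::real^'k::finite. gauss_prior s (vec_nth v))"
  unfolding gauss_prior_def
proof (intro convex_on_sum_fun convex_on_cdiv convex_on_compose_linear[OF _ convex_power2])
  show "linear (\<lambda>v::real^'k. v $ m)" for m by (rule linearI) simp_all
qed simp_all

(* Polyrating parameters (R, B) are represented by the rating vectors (R, R + B), in which the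
   objective splits into the two losses plus this prior. *)
definition poly_prior :: "real \<Rightarrow> real \<Rightarrow> (real^'k::finite) \<times> (real^'k) \<Rightarrow> real" where
  "poly_prior sn s1 z = gauss_prior sn (vec_nth (fst z)) + gauss_prior s1 (vec_nth (snd z - fst z))"

lemma poly_prior_nonneg: "0 \<le> poly_prior sn s1 z"
  unfolding poly_prior_def by (intro add_nonneg_nonneg gauss_prior_nonneg)

lemma convex_on_poly_prior: "convex_on UNIV (poly_prior sn s1)"
  unfolding poly_prior_def
  by (intro convex_on_add convex_on_compose_linear[OF _ convex_on_gauss_prior]
      linear_fst linear_compose_sub linear_snd)

lemma poly_obj_vec:
  "poly_obj sn s1 Dn Dt (vec_nth x, vec_nth (y - x))
    = loss Dn (vec_nth x) + loss Dt (vec_nth y) + poly_prior sn s1 (x, y)"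
  unfolding poly_obj_eq poly_prior_def by simp

lemma poly_obj_center_le:
  "loss Dn (vec_nth (center R)) + loss Dt (vec_nth (center (\<lambda>m. R m + B m)))
      + poly_prior sn s1 (center R, center (\<lambda>m. R m + B m))
    \<le> poly_obj sn s1 Dn Dt (R, B)"
proof -
  have "center (\<lambda>m. R m + B m) - center R = center B" by (simp add: center_add)
  then show ?thesis
    unfolding poly_prior_def poly_obj_eq
    by (simp add: shift_invariant_center[of "loss _", OF loss_shift] add_mono gauss_prior_center_le)
qed

subsection \<open>Consistency of the fitted ratings\<close>

lemma empirical_loss_separated_min:
  fixes S :: "nat \<Rightarrow> 'k::finite game list" and P :: "'k game pmf"
  assumes P: "set_pmf P \<subseteq> valid_games"
    and S: "\<And>N. set (S N) \<subseteq> valid_games" "\<And>N. length (S N) = N"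
    and freq: "\<And>g. g \<in> valid_games \<Longrightarrow> (\<lambda>N. count_list (S N) g / N) \<longlonglongrightarrow> pmf P g"
    and min: "is_minimizer (exp_loss P) R0"
    and unique: "\<And>R. is_minimizer (exp_loss P) R \<Longrightarrow> \<exists>c. \<forall>m. R m = R0 m + c"
    and r: "0 < r"
  shows "eventually (\<lambda>N. separated_min_on centered (\<lambda>v. loss (S N) (vec_nth v)) (center R0) r K)
    sequentially"
proof -
  define F where "F N v = weighted_loss (\<lambda>g. count_list (S N) g / N) (vec_nth v)" for N v
  define f where "f v = weighted_loss (pmf P) (vec_nth v)" for v :: "real^'k"
  have exp_loss: "exp_loss P = weighted_loss (pmf P)"
    using exp_loss_eq_weighted_loss[OF P] by blast
  note min_w = min[unfolded exp_loss] and unique_w = unique[unfolded exp_loss]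
  have "eventually (\<lambda>N. separated_min_on centered (\<lambda>v. real N * F N v) (center R0) r K) sequentially"
  proof (rule separated_min_on_eventually_unbounded[OF closed_centered])
    show "convex_on centered (F N)" for N
      unfolding F_def by (rule convex_on_subset[OF convex_on_weighted_loss _ convex_centered]) auto
    show "convex_on centered f"
      unfolding f_def by (rule convex_on_subset[OF convex_on_weighted_loss _ convex_centered]) auto
    show "continuous_on centered f"
      unfolding f_def by (rule continuous_on_weighted_loss)
    show "f (center R0) \<le> f y" if "y \<in> centered" for y
      using centered_unique_min(1)[OF weighted_loss_shift min_w unique_w that] by (simp add: f_def)
    show "y = center R0" if "y \<in> centered" "\<And>z. z \<in> centered \<Longrightarrow> f y \<le> f z" for y
      using centered_unique_min(2)[OF weighted_loss_shift min_w unique_w] that by (simp add: f_def)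
    have "compact (centered \<inter> cball (center R0) r)"
      by (rule closed_Int_compact[OF closed_centered compact_cball])
    then show "uniform_limit (centered \<inter> cball (center R0) r) F f sequentially"
      unfolding F_def f_def weighted_loss_def
      by (intro uniform_limit_weighted_sum finite_valid_games continuous_on_game_loss freq)
  qed (use center_in_centered r in auto)
  then show ?thesis
    using loss_eq_scaled_weighted_loss[OF S(1)] by (simp add: F_def S(2))
qed

lemma rating_consistent:
  fixes S :: "nat \<Rightarrow> 'k::finite game list" and Rs :: "nat \<Rightarrow> 'k \<Rightarrow> real"
  assumes S: "\<And>N. set (S N) \<subseteq> valid_games"
    and sep: "\<And>r. 0 < r \<Longrightarrow>
      eventually (\<lambda>N. separated_min_on centered (\<lambda>v. loss (S N) (vec_nth v)) (center R0) r 1) sequentially"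
    and Rs: "\<And>N. (\<exists>R. is_minimizer (loss (S N)) R) \<Longrightarrow> is_minimizer (loss (S N)) (Rs N)"
  shows "conv_upto_const Rs R0 sequentially"
proof (rule tendsto_center_imp_conv_upto_const)
  show "(\<lambda>N. center (Rs N)) \<longlonglongrightarrow> center R0"
  proof (rule minimizers_tendsto_separated_min[OF closed_centered continuous_on_loss[OF S]
        center_in_centered sep center_in_centered])
    fix N and y :: "real^'k" assume "\<exists>v\<in>centered. \<forall>y\<in>centered. loss (S N) (vec_nth v) \<le> loss (S N) (vec_nth y)"
      and y: "y \<in> centered"
    then have "is_minimizer (loss (S N)) (Rs N)"
      using Rs is_minimizer_iff_centered_min[of "loss (S N)", OF loss_shift] by blast
    then show "loss (S N) (vec_nth (center (Rs N))) \<le> loss (S N) (vec_nth y)"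
      unfolding is_minimizer_def shift_invariant_center[of "loss (S N)", OF loss_shift] by blast
  qed
qed

lemma polyrating_consistent:
  fixes Sn St :: "nat \<Rightarrow> 'k::finite game list" and Rp Bp :: "nat \<times> nat \<Rightarrow> 'k \<Rightarrow> real"
  assumes Sn: "\<And>N. set (Sn N) \<subseteq> valid_games"
    and sep_n: "\<And>r K. 0 < r \<Longrightarrow>
      eventually (\<lambda>N. separated_min_on centered (\<lambda>v. loss (Sn N) (vec_nth v)) (center Rn0) r K) sequentially"
    and St: "\<And>n. set (St n) \<subseteq> valid_games"
    and sep_t: "\<And>r K. 0 < r \<Longrightarrow>
      eventually (\<lambda>n. separated_min_on centered (\<lambda>v. loss (St n) (vec_nth v)) (center Rt0) r K) sequentially"
    and min: "\<And>n N. is_minimizer (poly_obj sn s1 (Sn N) (St n)) (Rp (n, N), Bp (n, N))"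
  shows "conv_upto_const (\<lambda>p m. Rp p m + Bp p m) Rt0 (sequentially \<times>\<^sub>F sequentially)
    \<and> conv_upto_const Rp Rn0 (sequentially \<times>\<^sub>F sequentially)"
proof -
  define L where "L p v = loss (Sn (snd p)) (vec_nth v)" for p :: "nat \<times> nat" and v :: "real^'k"
  define M where "M p v = loss (St (fst p)) (vec_nth v)" for p :: "nat \<times> nat" and v :: "real^'k"
  have "((\<lambda>p. center (Rp p)) \<longlongrightarrow> center Rn0) (sequentially \<times>\<^sub>F sequentially)
    \<and> ((\<lambda>p. center (\<lambda>m. Rp p m + Bp p m)) \<longlongrightarrow> center Rt0) (sequentially \<times>\<^sub>F sequentially)"
  proof (rule joint_minimizers_tendsto[OF closed_centered convex_centered,
        where L = L and M = M and q = "poly_prior sn s1"])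
    show "convex_on centered (L p)" "convex_on centered (M p)" for p
      unfolding L_def M_def
      by (rule convex_on_subset[OF convex_on_loss _ convex_centered], simp add: Sn St, simp)+
    show "continuous_on centered (L p)" "continuous_on centered (M p)" for p
      unfolding L_def M_def by (rule continuous_on_loss, simp add: Sn St)+
    show "eventually (\<lambda>p. separated_min_on centered (L p) (center Rn0) r K) (sequentially \<times>\<^sub>F sequentially)"
      if "0 < r" for r K
      unfolding L_def using eventually_prodI[OF eventually_True sep_n[OF that]] by simp
    show "eventually (\<lambda>p. separated_min_on centered (M p) (center Rt0) r K) (sequentially \<times>\<^sub>F sequentially)"
      if "0 < r" for r K
      unfolding M_def using eventually_prodI[OF sep_t[OF that] eventually_True] by simp
    show "convex_on (centered \<times> centered) (poly_prior sn s1)"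
      using convex_on_poly_prior by (rule convex_on_subset) (simp_all add: convex_Times convex_centered)
    show "continuous_on (centered \<times> centered) (poly_prior sn s1)"
      using convex_on_continuous[OF open_UNIV convex_on_poly_prior] by (rule continuous_on_subset) simp
    fix p :: "nat \<times> nat" and x' y' :: "real^'k"
    obtain n N where p: "p = (n, N)" by (cases p)
    have "L p (center (Rp p)) + M p (center (\<lambda>m. Rp p m + Bp p m))
        + poly_prior sn s1 (center (Rp p), center (\<lambda>m. Rp p m + Bp p m))
      \<le> poly_obj sn s1 (Sn N) (St n) (Rp p, Bp p)"
      unfolding L_def M_def p prod.sel by (rule poly_obj_center_le)
    also have "\<dots> \<le> poly_obj sn s1 (Sn N) (St n) (vec_nth x', vec_nth (y' - x'))"
      using min unfolding is_minimizer_def p by blast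
    finally show "L p (center (Rp p)) + M p (center (\<lambda>m. Rp p m + Bp p m))
        + poly_prior sn s1 (center (Rp p), center (\<lambda>m. Rp p m + Bp p m))
      \<le> L p x' + M p y' + poly_prior sn s1 (x', y')"
      unfolding L_def M_def p prod.sel poly_obj_vec by simp
  qed (use center_in_centered poly_prior_nonneg in auto)
  then show ?thesis
    using tendsto_center_imp_conv_upto_const[of "\<lambda>p m. Rp p m + Bp p m"]
      tendsto_center_imp_conv_upto_const[of Rp] by blast
qed

lemma length_sample [simp]: "length (sample X b N \<omega>) = N"
  by (simp add: sample_def)

lemma set_sample: "set (sample X b N \<omega>) = (\<lambda>n. X (b, n) \<omega>) ` {..<N}"
  by (auto simp: sample_def)

lemma count_list_sample: "real (count_list (sample X b N \<omega>) g) = (\<Sum>n<N. indicator {g} (X (b, n) \<omega>))"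
  by (induction N) (simp_all add: sample_def indicator_def)

context prob_space
begin

lemma AE_sample_in_support:
  assumes X: "\<And>n. X (b, n) \<in> measurable M (count_space UNIV)"
    and distr: "\<And>n. distr M (count_space UNIV) (X (b, n)) = measure_pmf P"
  shows "AE \<omega> in M. \<forall>N. set (sample X b N \<omega>) \<subseteq> set_pmf P"
proof -
  have "AE \<omega> in M. X (b, n) \<omega> \<in> set_pmf P" for n
  proof -
    have "AE y in distr M (count_space UNIV) (X (b, n)). y \<in> set_pmf P"
      unfolding distr by (rule AE_measure_pmf)
    then show ?thesis using X by (subst (asm) AE_distr_iff) auto
  qed
  then have "AE \<omega> in M. \<forall>n. X (b, n) \<omega> \<in> set_pmf P" by (simp add: AE_all_countable)
  then show ?thesis by (rule eventually_mono) (auto simp: set_sample)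
qed

lemma AE_sample_frequency_tendsto:
  assumes indep: "indep_vars (\<lambda>_. count_space UNIV) X UNIV"
    and distr: "\<And>n. distr M (count_space UNIV) (X (b, n)) = measure_pmf P"
  shows "AE \<omega> in M. (\<lambda>N. count_list (sample X b N \<omega>) g / N) \<longlonglongrightarrow> pmf P g"
proof -
  define Z where "Z j \<omega> = (indicator {g} (X j \<omega>) :: real)" for j \<omega>
  have "indep_vars (\<lambda>_. borel) Z UNIV"
    unfolding Z_def using indep by (rule indep_vars_compose2) simp
  then have indep_Z: "indep_vars (\<lambda>_. borel) Z (range (Pair b))"
    by (rule indep_vars_subset) simp
  have mean_Z: "expectation (Z (b, n)) = pmf P g" for n
  proof -
    have "X (b, n) \<in> measurable M (count_space UNIV)" using indep by (simp add: indep_vars_def)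
    then have "expectation (Z (b, n)) = integral\<^sup>L (distr M (count_space UNIV) (X (b, n))) (indicator {g})"
      unfolding Z_def by (subst integral_distr) auto
    then show ?thesis by (simp add: distr measure_pmf_single)
  qed
  have "AE \<omega> in M. (\<lambda>N. (\<Sum>n<N. Z (b, n) \<omega>) / N) \<longlonglongrightarrow> pmf P g"
    by (rule AE_average_tendsto[OF indep_Z _ _ mean_Z]) (simp_all add: inj_on_def Z_def)
  then show ?thesis by (simp add: count_list_sample Z_def)
qed

lemma AE_sample_valid_and_frequencies_tendsto:
  fixes X :: "bool \<times> nat \<Rightarrow> 'a \<Rightarrow> 'k::finite game"
  assumes indep: "indep_vars (\<lambda>_. count_space UNIV) X UNIV" and P: "set_pmf P \<subseteq> valid_games"
    and distr: "\<And>n. distr M (count_space UNIV) (X (b, n)) = measure_pmf P"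
  shows "AE \<omega> in M. (\<forall>N. set (sample X b N \<omega>) \<subseteq> valid_games)
    \<and> (\<forall>g\<in>valid_games. (\<lambda>N. count_list (sample X b N \<omega>) g / N) \<longlonglongrightarrow> pmf P g)"
proof (intro eventually_conj)
  have X: "X (b, n) \<in> measurable M (count_space UNIV)" for n
    using indep by (simp add: indep_vars_def)
  show "AE \<omega> in M. \<forall>N. set (sample X b N \<omega>) \<subseteq> valid_games"
    using AE_sample_in_support[where X = X, OF X distr] P by (auto elim: eventually_mono)
  show "AE \<omega> in M. \<forall>g\<in>valid_games. (\<lambda>N. count_list (sample X b N \<omega>) g / N) \<longlonglongrightarrow> pmf P g"
    by (rule AE_finite_allI[OF finite_valid_games]) (rule AE_sample_frequency_tendsto[OF indep distr])
qed

end

theorem mainTheorem3: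
  fixes M :: "'o measure"
    and X :: "bool \<times> nat \<Rightarrow> 'o \<Rightarrow> ('k::finite) game"
    and Pt Pn :: "'k game pmf"
    and sn s1 :: real
    and Rt Rn :: "'o \<Rightarrow> nat \<Rightarrow> 'k \<Rightarrow> real"
    and Rp Bp :: "'o \<Rightarrow> nat \<times> nat \<Rightarrow> 'k \<Rightarrow> real"
    and Rst Rsn :: "'k \<Rightarrow> real"
  assumes "prob_space M"
    and "set_pmf Pt \<subseteq> valid_games" and "set_pmf Pn \<subseteq> valid_games"
    and "prob_space.indep_vars M (\<lambda>_. count_space UNIV) X UNIV"
    and "\<And>i. distr M (count_space UNIV) (X (True, i)) = measure_pmf Pt"
    and "\<And>i. distr M (count_space UNIV) (X (False, i)) = measure_pmf Pn"
    and "sn > 0" and "s1 > 0"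
    and "\<And>\<omega> n. (\<exists>R. is_minimizer (loss (sample X True n \<omega>)) R)
                 \<Longrightarrow> is_minimizer (loss (sample X True n \<omega>)) (Rt \<omega> n)"
    and "\<And>\<omega> N. (\<exists>R. is_minimizer (loss (sample X False N \<omega>)) R)
                 \<Longrightarrow> is_minimizer (loss (sample X False N \<omega>)) (Rn \<omega> N)"
    and "\<And>\<omega> n N. is_minimizer (poly_obj sn s1 (sample X False N \<omega>) (sample X True n \<omega>))
                    (Rp \<omega> (n, N), Bp \<omega> (n, N))"
    and "is_minimizer (exp_loss Pt) Rst"
    and "\<And>R. is_minimizer (exp_loss Pt) R \<Longrightarrow> \<exists>c. \<forall>m. R m = Rst m + c"
    and "is_minimizer (exp_loss Pn) Rsn"
    and "\<And>R. is_minimizer (exp_loss Pn) R \<Longrightarrow> \<exists>c. \<forall>m. R m = Rsn m + c"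
  shows "AE \<omega> in M.
           conv_upto_const (Rt \<omega>) Rst sequentially
         \<and> conv_upto_const (\<lambda>p m. Rp \<omega> p m + Bp \<omega> p m) Rst (sequentially \<times>\<^sub>F sequentially)
         \<and> conv_upto_const (Rn \<omega>) Rsn sequentially
         \<and> conv_upto_const (Rp \<omega>) Rsn (sequentially \<times>\<^sub>F sequentially)"
proof -
  interpret prob_space M by fact
  let ?good = "\<lambda>b P \<omega>. (\<forall>N. set (sample X b N \<omega>) \<subseteq> valid_games)
    \<and> (\<forall>g\<in>valid_games. (\<lambda>N. count_list (sample X b N \<omega>) g / N) \<longlonglongrightarrow> pmf P g)"
  have "AE \<omega> in M. ?good True Pt \<omega> \<and> ?good False Pn \<omega>"
    using AE_sample_valid_and_frequencies_tendsto[OF assms(4,2,5)]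
      AE_sample_valid_and_frequencies_tendsto[OF assms(4,3,6)] by (rule eventually_conj)
  then show ?thesis
  proof (rule eventually_mono)
    fix \<omega> assume good: "?good True Pt \<omega> \<and> ?good False Pn \<omega>"
    have sep_t: "eventually (\<lambda>n. separated_min_on centered (\<lambda>v. loss (sample X True n \<omega>) (vec_nth v))
      (center Rst) r K) sequentially" if "0 < r" for r K
      using good that by (intro empirical_loss_separated_min[OF assms(2) _ _ _ assms(12,13)]) auto
    have sep_n: "eventually (\<lambda>N. separated_min_on centered (\<lambda>v. loss (sample X False N \<omega>) (vec_nth v))
      (center Rsn) r K) sequentially" if "0 < r" for r K
      using good that by (intro empirical_loss_separated_min[OF assms(3) _ _ _ assms(14,15)]) auto
    show "conv_upto_const (Rt \<omega>) Rst sequentially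
         \<and> conv_upto_const (\<lambda>p m. Rp \<omega> p m + Bp \<omega> p m) Rst (sequentially \<times>\<^sub>F sequentially)
         \<and> conv_upto_const (Rn \<omega>) Rsn sequentially
         \<and> conv_upto_const (Rp \<omega>) Rsn (sequentially \<times>\<^sub>F sequentially)"
      using rating_consistent[OF _ sep_t assms(9)] rating_consistent[OF _ sep_n assms(10)]
        polyrating_consistent[OF _ sep_n _ sep_t assms(11)] good by blast
  qed
qed

end
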